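(* Let $P$ be a finite graded bowtie-free poset of rank $n$ with $\hat0,\hat1$ and a good $\mathcal{H}_n(0)$ action $U_1,\dots,U_{n-1}$, and for each maximal chain $\mathfrak m$ let $\omega_{\mathfrak m}$ be as defined below. Then: (a) if $U_{i_1}\cdots U_{i_r}(\mathfrak m)=\mathfrak m_0$ is restless, then $s_{i_1}\cdots s_{i_r}$ is a reduced expression for $\omega_{\mathfrak m}$, and conversely for every reduced expression $\omega_{\mathfrak m}=s_{j_1}\cdots s_{j_r}$ the expression $U_{j_1}\cdots U_{j_r}(\mathfrak m)=\mathfrak m_0$ is restless; (b) for $i\in[n-1]$, the permutation $\omega_{\mathfrak m}$ has a descent at $i$ if and only if $U_i(\mathfrak m)\ne\mathfrak m$, and in that case $\omega_{U_i(\mathfrak m)}=\omega_{\mathfrak m}s_i$.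
   Context: $s_i$ is the adjacent transposition $(i\ i+1)$; permutations compose right to left; a permutation $\omega$ has a descent at $i$ if $\omega(i)>\omega(i+1)$. Bowtie-free: no distinct $a,b,c,d$ with $a$ and $b$ each covering both $c$ and $d$. A good $\mathcal{H}_n(0)$ action is a family $U_1,\dots,U_{n-1}$ of maps on the set $\mathcal{M}(P)$ of maximal chains with: $U_i(\mathfrak m)$ agrees with $\mathfrak m$ except possibly at rank $i$; $U_i^2=U_i$; $U_iU_j=U_jU_i$ for $|i-j|\ge2$; $U_iU_{i+1}U_i=U_{i+1}U_iU_{i+1}$; and $\omega F_P=\mathrm{ch}(\chi_P)$ ($\chi_P$ the character of the $\mathcal{H}_n(0)$-module $\mathbb{C}\mathcal{M}(P)$ with $T_i=-U_i$, $F_P$ Ehrenborg's flag quasisymmetric function, $\omega(L_{S,n})=L_{[n-1]\setminus S,n}$, $\mathrm{ch}(\chi_S)=L_{S,n}$ for the one-dimensional characters $\chi_S$). An expression $U_{i_1}\cdots U_{i_r}(\mathfrak m)=\mathfrak m'$ is restless if each successive application of $U_{i_r},U_{i_{r-1}},\dots,U_{i_1}$ changes the chain. Facts from the paper: $P$ has a unique maximal chain $\mathfrak m_0$ with $U_i(\mathfrak m_0)=\mathfrak m_0$ for all $i$; for every maximal chain $\mathfrak m$ there is a restless expression $U_{i_1}\cdots U_{i_r}(\mathfrak m)=\mathfrak m_0$; and the permutation $s_{i_1}\cdots s_{i_r}$ does not depend on the choice of restless expression. This permutation is denoted $\omega_{\mathfrak m}$. *)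

theory Defs
  imports "HOL-Combinatorics.Transposition"
begin

definition is_chain :: "'a::order set \<Rightarrow> bool" where
  "is_chain S \<longleftrightarrow> (\<forall>x\<in>S. \<forall>y\<in>S. x \<le> y \<or> y \<le> x)"

definition maximal_chain :: "'a::order set \<Rightarrow> bool" where
  "maximal_chain S \<longleftrightarrow> is_chain S \<and> (\<forall>T. is_chain T \<and> S \<subseteq> T \<longrightarrow> T = S)"

definition covers :: "'a::order \<Rightarrow> 'a \<Rightarrow> bool" where
  "covers y x \<longleftrightarrow> x < y \<and> \<not> (\<exists>z. x < z \<and> z < y)"

definition has_bot_top :: "'a::order itself \<Rightarrow> bool" where
  "has_bot_top _ \<longleftrightarrow> (\<exists>b::'a. \<forall>x. b \<le> x) \<and> (\<exists>t::'a. \<forall>x. x \<le> t)"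

definition graded_rank :: "'a::order itself \<Rightarrow> nat \<Rightarrow> bool" where
  "graded_rank _ n \<longleftrightarrow> (\<forall>S::'a set. maximal_chain S \<longrightarrow> card S = n + 1)"

definition bowtie_free :: "'a::order itself \<Rightarrow> bool" where
  "bowtie_free _ \<longleftrightarrow> \<not> (\<exists>a b c d :: 'a. distinct [a, b, c, d] \<and>
      covers a c \<and> covers a d \<and> covers b c \<and> covers b d)"

definition rank :: "'a::{order,finite} \<Rightarrow> nat" where
  "rank x = Max {card S - 1 | S. is_chain S \<and> S \<noteq> {} \<and> (\<forall>y\<in>S. y \<le> x)}"

text \<open>Maximal chains, listed in increasing order; entry i is the element of rank i.\<close>
definition mchains :: "'a::order itself \<Rightarrow> 'a list set" where
  "mchains _ = {c. sorted_wrt (<) c \<and> maximal_chain (set c)}"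

definition flag_f :: "'a::{order,finite} itself \<Rightarrow> nat set \<Rightarrow> nat" where
  "flag_f _ J = card {C::'a set. is_chain C \<and> rank ` C = J}"

section \<open>Quasisymmetric functions of degree n, as coefficient vectors in the
  monomial basis M_S, S \<subseteq> [n-1]\<close>

text \<open>Ehrenborg's flag quasisymmetric function: F_P = sum_J alpha_P(J) M_J\<close>
definition F_P :: "'a::{order,finite} itself \<Rightarrow> nat \<Rightarrow> nat set \<Rightarrow> int" where
  "F_P tp n T = (if T \<subseteq> {1..<n} then int (flag_f tp T) else 0)"

text \<open>Fundamental quasisymmetric function L_{S,n} = sum_{S \<subseteq> T \<subseteq> [n-1]} M_T\<close>
definition L_fund :: "nat set \<Rightarrow> nat \<Rightarrow> nat set \<Rightarrow> int" where
  "L_fund S n T = (if S \<subseteq> T \<and> T \<subseteq> {1..<n} then 1 else 0)"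

fun Uapp :: "(nat \<Rightarrow> 'b \<Rightarrow> 'b) \<Rightarrow> nat list \<Rightarrow> 'b \<Rightarrow> 'b" where
  "Uapp U [] m = m"
| "Uapp U (i # w) m = U i (Uapp U w m)"

fun restless :: "(nat \<Rightarrow> 'b \<Rightarrow> 'b) \<Rightarrow> nat list \<Rightarrow> 'b \<Rightarrow> bool" where
  "restless U [] m = True"
| "restless U (i # w) m = (restless U w m \<and> U i (Uapp U w m) \<noteq> Uapp U w m)"

text \<open>Character of the module C M(P) with T_i = -U_i, evaluated at T_{i1}...T_{ir}:
  the trace of (-1)^r U_{i1}...U_{ir} on the basis M(P).\<close>
definition char_P :: "'a::order itself \<Rightarrow> (nat \<Rightarrow> 'a list \<Rightarrow> 'a list) \<Rightarrow> nat list \<Rightarrow> int" where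
  "char_P tp U w = (-1) ^ length w * int (card {m \<in> mchains tp. Uapp U w m = m})"

text \<open>One-dimensional character chi_S: T_i \<mapsto> -1 for i \<in> S, T_i \<mapsto> 0 otherwise.\<close>
definition chi :: "nat set \<Rightarrow> nat list \<Rightarrow> int" where
  "chi S w = (if set w \<subseteq> S then (-1) ^ length w else 0)"

definition good_action :: "'a::{order,finite} itself \<Rightarrow> nat \<Rightarrow> (nat \<Rightarrow> 'a list \<Rightarrow> 'a list) \<Rightarrow> bool" where
  "good_action tp n U \<longleftrightarrow>
     (\<forall>i\<in>{1..<n}. \<forall>m\<in>mchains tp. U i m \<in> mchains tp) \<and>
     (\<forall>i\<in>{1..<n}. \<forall>m\<in>mchains tp. \<forall>j<length m. j \<noteq> i \<longrightarrow> U i m ! j = m ! j) \<and>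
     (\<forall>i\<in>{1..<n}. \<forall>m\<in>mchains tp. U i (U i m) = U i m) \<and>
     (\<forall>i\<in>{1..<n}. \<forall>j\<in>{1..<n}. \<forall>m\<in>mchains tp.
        (i \<ge> j + 2 \<or> j \<ge> i + 2) \<longrightarrow> U i (U j m) = U j (U i m)) \<and>
     (\<forall>i. 1 \<le> i \<and> i + 1 < n \<longrightarrow> (\<forall>m\<in>mchains tp.
        U i (U (i+1) (U i m)) = U (i+1) (U i (U (i+1) m)))) \<and>
     \<comment> \<open>omega F_P = ch(chi_P): writing F_P = sum_S b_S L_S and chi_P = sum_S c_S chi_S,
        omega F_P = sum_S b_S L_{[n-1]-S} and ch(chi_P) = sum_S c_S L_S\<close>
     (\<exists>b c :: nat set \<Rightarrow> int.
        (\<forall>T. F_P tp n T = (\<Sum>S\<in>Pow {1..<n}. b S * L_fund S n T)) \<and>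
        (\<forall>w. set w \<subseteq> {1..<n} \<longrightarrow> char_P tp U w = (\<Sum>S\<in>Pow {1..<n}. c S * chi S w)) \<and>
        (\<forall>T. (\<Sum>S\<in>Pow {1..<n}. b S * L_fund ({1..<n} - S) n T)
            = (\<Sum>S\<in>Pow {1..<n}. c S * L_fund S n T)))"

text \<open>s_i = (i i+1); products compose right to left\<close>
definition s :: "nat \<Rightarrow> nat \<Rightarrow> nat" where
  "s i = transpose i (i + 1)"

definition sprod :: "nat list \<Rightarrow> nat \<Rightarrow> nat" where
  "sprod w = foldr (\<lambda>i f. s i \<circ> f) w id"

definition inv_count :: "nat \<Rightarrow> (nat \<Rightarrow> nat) \<Rightarrow> nat" where
  "inv_count n \<sigma> = card {(i, j). 1 \<le> i \<and> i < j \<and> j \<le> n \<and> \<sigma> i > \<sigma> j}"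

definition reduced_expr :: "nat \<Rightarrow> nat list \<Rightarrow> (nat \<Rightarrow> nat) \<Rightarrow> bool" where
  "reduced_expr n w \<sigma> \<longleftrightarrow> set w \<subseteq> {1..<n} \<and> sprod w = \<sigma> \<and> length w = inv_count n \<sigma>"

definition has_descent :: "(nat \<Rightarrow> nat) \<Rightarrow> nat \<Rightarrow> bool" where
  "has_descent \<sigma> i \<longleftrightarrow> \<sigma> i > \<sigma> (i + 1)"

definition m0 :: "'a::order itself \<Rightarrow> nat \<Rightarrow> (nat \<Rightarrow> 'a list \<Rightarrow> 'a list) \<Rightarrow> 'a list" where
  "m0 tp n U = (THE m. m \<in> mchains tp \<and> (\<forall>i\<in>{1..<n}. U i m = m))"

definition omega_m :: "'a::order itself \<Rightarrow> nat \<Rightarrow> (nat \<Rightarrow> 'a list \<Rightarrow> 'a list) \<Rightarrow> 'a list \<Rightarrow> nat \<Rightarrow> nat" where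
  "omega_m tp n U m = (THE \<sigma>. \<exists>w. set w \<subseteq> {1..<n} \<and> restless U w m \<and>
       Uapp U w m = m0 tp n U \<and> \<sigma> = sprod w)"

end

theory Submission
  imports Defs
begin

text \<open>Call \<open>m \<mapsto> U\<^sub>i m\<close> a move if \<open>U\<^sub>i m \<noteq> m\<close>. Two moves out of \<open>m\<close> can always be joined: by a
  square if \<open>U\<^sub>i\<close>, \<open>U\<^sub>j\<close> commute, by a hexagon (braid relation) if \<open>i\<close>, \<open>j\<close> are adjacent, where
  bowtie-freeness keeps both sides of the hexagon restless; the words along the two sides have
  the same product in the symmetric group. As moves admit no cycles and \<open>m\<^sub>0\<close> is the only chain
  without moves, well-founded induction shows that all restless paths from \<open>m\<close> to \<open>m\<^sub>0\<close> have
  the same product \<open>\<omega>\<^sub>m\<close>, and that \<open>\<omega>\<^sub>m\<close> has an ascent wherever \<open>m\<close> has no move. So along a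
  move \<open>U\<^sub>i\<close> the permutation is multiplied by \<open>s\<^sub>i\<close> and loses an inversion, and restless
  paths are reduced words; conversely the last letter of a reduced word for \<open>\<omega>\<^sub>m\<close> is a
  descent, i.e. a move.

  Absence of cycles and uniqueness of \<open>m\<^sub>0\<close> come from \<open>\<omega> F\<^sub>P = ch(\<chi>\<^sub>P)\<close>, which says that
  \<open>U\<^sub>w\<close> has exactly as many fixed points as there are chains with rank set \<open>[n-1] - set w\<close>.
  A reduced word for the longest element of the parabolic subgroup on \<open>set w\<close> retracts all
  maximal chains onto these fixed points without changing them at the ranks outside \<open>set w\<close>.
  So every chain with rank set \<open>[n-1] - set w\<close> is the restriction of a fixed point, and by the
  count distinct fixed points have distinct restrictions. A restless cycle through \<open>m\<close> is
  impossible: \<open>m\<close> and its retraction would be distinct fixed points with the same restriction.\<close>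

section \<open>Simple transpositions and inversions\<close>

lemma s_apply_s [simp]: "s i (s i x) = x"
  by (simp add: s_def)

lemma s_comp_s: "s i \<circ> s i = id"
  by (simp add: fun_eq_iff)

lemma bij_s: "bij (s i)"
  by (simp add: s_def)

lemma sprod_Nil [simp]: "sprod [] = id"
  by (simp add: sprod_def)

lemma sprod_Cons [simp]: "sprod (i # w) = s i \<circ> sprod w"
  by (simp add: sprod_def)

lemma sprod_append: "sprod (v @ w) = sprod v \<circ> sprod w"
  by (induction v) (simp_all add: comp_assoc)

lemma sprod_snoc: "sprod (w @ [i]) = sprod w \<circ> s i"
  by (simp add: sprod_append)

lemma bij_sprod: "bij (sprod w)"
proof (induction w)
  case (Cons i w)
  then show ?case
    unfolding sprod_Cons by (rule bij_comp[OF _ bij_s])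
qed (simp only: sprod_Nil bij_id)

lemma s_comp_commute: "i + 2 \<le> j \<or> j + 2 \<le> i \<Longrightarrow> s i \<circ> s j = s j \<circ> s i"
  by (auto simp: s_def transpose_def fun_eq_iff)

lemma s_comp_braid: "i = j + 1 \<or> j = i + 1 \<Longrightarrow> s i \<circ> s j \<circ> s i = s j \<circ> s i \<circ> s j"
  by (auto simp: s_def transpose_def fun_eq_iff)

definition inversions :: "nat \<Rightarrow> (nat \<Rightarrow> nat) \<Rightarrow> (nat \<times> nat) set" where
  "inversions n \<sigma> = {(i, j). 1 \<le> i \<and> i < j \<and> j \<le> n \<and> \<sigma> i > \<sigma> j}"

lemma inv_count_eq_card_inversions: "inv_count n \<sigma> = card (inversions n \<sigma>)"
  by (simp add: inv_count_def inversions_def)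

lemma finite_inversions: "finite (inversions n \<sigma>)"
  by (rule finite_subset[of _ "{1..n} \<times> {1..n}"]) (auto simp: inversions_def)

lemma inversions_comp_s_subset:
  assumes "1 \<le> i" "i < n"
  shows "map_prod (s i) (s i) ` (inversions n (\<sigma> \<circ> s i) - {(i, i + 1)})
           \<subseteq> inversions n \<sigma> - {(i, i + 1)}"
  using assms by (auto simp: inversions_def s_def transpose_def split: if_splits)

lemma inv_count_comp_s_ascent:
  assumes "1 \<le> i" "i < n" "\<sigma> i < \<sigma> (i + 1)"
  shows "inv_count n (\<sigma> \<circ> s i) = inv_count n \<sigma> + 1"
proof -
  let ?p = "(i, i + 1)" and ?swap = "map_prod (s i) (s i)"
  have "bij_betw ?swap (inversions n (\<sigma> \<circ> s i) - {?p}) (inversions n \<sigma> - {?p})"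
    using inversions_comp_s_subset[OF assms(1,2), of \<sigma>]
      inversions_comp_s_subset[OF assms(1,2), of "\<sigma> \<circ> s i"]
    by (intro bij_betw_byWitness[where f' = ?swap]) (auto simp: comp_assoc s_comp_s)
  then have "card (inversions n (\<sigma> \<circ> s i) - {?p}) = card (inversions n \<sigma> - {?p})"
    by (rule bij_betw_same_card)
  moreover have "?p \<in> inversions n (\<sigma> \<circ> s i)" "?p \<notin> inversions n \<sigma>"
    using assms by (auto simp: inversions_def s_def)
  ultimately show ?thesis
    unfolding inv_count_eq_card_inversions
    by (simp add: card.remove[OF finite_inversions] del: card_Diff_insert)
qed

lemma inv_count_comp_s_descent:
  assumes "1 \<le> i" "i < n" "\<sigma> (i + 1) < \<sigma> i"
  shows "inv_count n (\<sigma> \<circ> s i) + 1 = inv_count n \<sigma>"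
  using inv_count_comp_s_ascent[OF assms(1,2), of "\<sigma> \<circ> s i"] assms(3)
  by (simp add: comp_assoc s_def)

lemma inv_count_id [simp]: "inv_count n id = 0"
  by (auto simp: inv_count_def card_eq_0_iff)

lemma inv_count_sprod_le: "set w \<subseteq> {1..<n} \<Longrightarrow> inv_count n (sprod w) \<le> length w"
proof (induction w rule: rev_induct)
  case (snoc j w)
  have "sprod w j \<noteq> sprod w (j + 1)"
    using bij_sprod[of w] by (metis bij_pointE n_not_Suc_n Suc_eq_plus1)
  then have "inv_count n (sprod w \<circ> s j) \<le> inv_count n (sprod w) + 1"
    using snoc.prems inv_count_comp_s_ascent[of j n "sprod w"] inv_count_comp_s_descent[of j n "sprod w"]
    by (cases "sprod w j < sprod w (j + 1)") auto
  moreover have "inv_count n (sprod w) \<le> length w"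
    using snoc by simp
  ultimately show ?case
    by (simp add: sprod_snoc comp_def)
qed simp

lemma reduced_word_last_descent:
  assumes "set (w @ [j]) \<subseteq> {1..<n}" "length (w @ [j]) = inv_count n (sprod (w @ [j]))"
  shows "has_descent (sprod (w @ [j])) j" "inv_count n (sprod w) = length w"
proof -
  let ?\<sigma> = "sprod (w @ [j])"
  have j: "1 \<le> j" "j < n" and w: "set w \<subseteq> {1..<n}"
    using assms(1) by auto
  have w_eq: "sprod w = ?\<sigma> \<circ> s j"
    by (simp add: sprod_snoc comp_assoc s_comp_s)
  have "\<not> ?\<sigma> j < ?\<sigma> (j + 1)"
  proof
    assume "?\<sigma> j < ?\<sigma> (j + 1)"
    then have "inv_count n (sprod w) = length w + 2"
      using inv_count_comp_s_ascent[OF j, of ?\<sigma>] assms(2) w_eq by simp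
    with inv_count_sprod_le[OF w] show False
      by simp
  qed
  moreover have "?\<sigma> j \<noteq> ?\<sigma> (j + 1)"
    using bij_sprod[of "w @ [j]"] by (metis bij_pointE n_not_Suc_n Suc_eq_plus1)
  ultimately show desc: "has_descent ?\<sigma> j"
    by (simp add: has_descent_def)
  show "inv_count n (sprod w) = length w"
    using inv_count_comp_s_descent[OF j, of ?\<sigma>] desc assms(2) w_eq by (simp add: has_descent_def)
qed

section \<open>Words in the operators of a 0-Hecke action\<close>

lemma Uapp_append: "Uapp U (v @ w) m = Uapp U v (Uapp U w m)"
  by (induction v) auto

lemma restless_append: "restless U (v @ w) m \<longleftrightarrow> restless U w m \<and> restless U v (Uapp U w m)"
  by (induction v) (auto simp: Uapp_append)

lemma Uapp_fixed: "(\<And>i. i \<in> set w \<Longrightarrow> U i m = m) \<Longrightarrow> Uapp U w m = m"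
  by (induction w) auto

locale zero_hecke_action =
  fixes M :: "'b list set" and n :: nat and U :: "nat \<Rightarrow> 'b list \<Rightarrow> 'b list"
  assumes U_closed: "i \<in> {1..<n} \<Longrightarrow> m \<in> M \<Longrightarrow> U i m \<in> M"
    and length_M: "m \<in> M \<Longrightarrow> length m = Suc n"
    and U_nth_other: "i \<in> {1..<n} \<Longrightarrow> m \<in> M \<Longrightarrow> k < length m \<Longrightarrow> k \<noteq> i \<Longrightarrow> U i m ! k = m ! k"
    and U_idem: "i \<in> {1..<n} \<Longrightarrow> m \<in> M \<Longrightarrow> U i (U i m) = U i m"
    and U_commute: "i \<in> {1..<n} \<Longrightarrow> j \<in> {1..<n} \<Longrightarrow> i + 2 \<le> j \<or> j + 2 \<le> i \<Longrightarrow> m \<in> M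
      \<Longrightarrow> U i (U j m) = U j (U i m)"
    and U_braid: "1 \<le> i \<Longrightarrow> i + 1 < n \<Longrightarrow> m \<in> M
      \<Longrightarrow> U i (U (i + 1) (U i m)) = U (i + 1) (U i (U (i + 1) m))"
begin

lemma U_braid_sym:
  assumes "i = j + 1 \<or> j = i + 1" "i \<in> {1..<n}" "j \<in> {1..<n}" "m \<in> M"
  shows "U i (U j (U i m)) = U j (U i (U j m))"
  using assms U_braid[of i m] U_braid[of j m] by auto

lemma U_changes_nth:
  assumes "i \<in> {1..<n}" "m \<in> M" "U i m \<noteq> m"
  shows "U i m ! i \<noteq> m ! i"
proof
  assume same: "U i m ! i = m ! i"
  have "U i m = m"
  proof (rule nth_equalityI)
    show "length (U i m) = length m"
      using assms(1,2) by (simp add: length_M U_closed)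
    then show "U i m ! k = m ! k" if "k < length (U i m)" for k
      using that same assms(1,2) U_nth_other by (cases "k = i") auto
  qed
  with assms(3) show False ..
qed

lemma Uapp_closed: "set w \<subseteq> {1..<n} \<Longrightarrow> m \<in> M \<Longrightarrow> Uapp U w m \<in> M"
  by (induction w) (auto intro: U_closed)

lemma Uapp_nth_other:
  "set w \<subseteq> {1..<n} \<Longrightarrow> m \<in> M \<Longrightarrow> k < Suc n \<Longrightarrow> k \<notin> set w \<Longrightarrow> Uapp U w m ! k = m ! k"
  by (induction w) (auto simp: U_nth_other Uapp_closed length_M)

lemma U_Uapp_commute:
  assumes "j \<in> {1..<n}" "set w \<subseteq> {1..<n}" "\<And>i. i \<in> set w \<Longrightarrow> i + 2 \<le> j \<or> j + 2 \<le> i" "m \<in> M"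
  shows "U j (Uapp U w m) = Uapp U w (U j m)"
  using assms
proof (induction w)
  case (Cons i w)
  then have "U j (U i (Uapp U w m)) = U i (U j (Uapp U w m))"
    by (intro U_commute) (auto simp: Uapp_closed)
  with Cons show ?case
    by simp
qed simp

lemma U_Uapp_upt_absorb:
  assumes "1 \<le> a" "a \<le> b" "b < n" "m \<in> M"
  shows "U a (Uapp U [a..<Suc b] m) = Uapp U [a..<Suc b] m"
proof -
  have "Uapp U [Suc a..<Suc b] m \<in> M"
    using assms by (intro Uapp_closed) auto
  then show ?thesis
    using assms by (simp add: upt_conv_Cons U_idem del: upt_Suc)
qed

lemma U_Uapp_upt_shift:
  assumes "1 \<le> a" "a \<le> j" "j < b" "b < n" "m \<in> M"
  shows "U (j + 1) (Uapp U [a..<Suc b] m) = Uapp U [a..<Suc b] (U j m)"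
  using assms
proof (induction "j - a" arbitrary: a)
  case 0
  then have j: "j = a"
    by simp
  let ?Y = "Uapp U [a + 2..<Suc b] m"
  have word: "[a..<Suc b] = a # (a + 1) # [a + 2..<Suc b]"
    using 0 j by (simp add: upt_conv_Cons)
  have "?Y \<in> M"
    using 0 by (intro Uapp_closed) auto
  then have "U (a + 1) (U a (U (a + 1) ?Y)) = U a (U (a + 1) (U a ?Y))"
    using 0 j U_braid[of a ?Y] by simp
  also have "U a ?Y = Uapp U [a + 2..<Suc b] (U a m)"
    using 0 j by (intro U_Uapp_commute) auto
  finally show ?case
    by (simp only: word j Uapp.simps)
next
  case (Suc d)
  let ?X = "Uapp U [Suc a..<Suc b] m"
  have word: "[a..<Suc b] = a # [Suc a..<Suc b]"
    using Suc by (simp add: upt_conv_Cons)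
  have "?X \<in> M"
    using Suc by (intro Uapp_closed) auto
  then have "U (j + 1) (U a ?X) = U a (U (j + 1) ?X)"
    using Suc.prems Suc.hyps(2) U_commute[of "j + 1" a ?X] by auto
  also have "U (j + 1) ?X = Uapp U [Suc a..<Suc b] (U j m)"
    using Suc by (intro Suc.hyps(1)) auto
  finally show ?case
    by (simp only: word Uapp.simps)
qed

definition absorbs :: "nat set \<Rightarrow> nat list \<Rightarrow> bool" where
  "absorbs J W \<longleftrightarrow> (\<forall>j\<in>J. \<forall>m\<in>M. U j (Uapp U W m) = Uapp U W m)"

lemma absorbs_upt_append:
  assumes "1 \<le> a" "a \<le> b" "b < n" "J \<subseteq> {1..<n}" "{a..b} \<subseteq> J" "a - 1 \<notin> J" "\<forall>j\<in>J. j \<le> b"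
    and W: "set W \<subseteq> {1..<n}" "absorbs (J - {b}) W"
  shows "absorbs J ([a..<Suc b] @ W)"
  unfolding absorbs_def
proof (intro ballI)
  fix j m
  assume "j \<in> J" "m \<in> M"
  let ?Y = "Uapp U W m"
  have "?Y \<in> M"
    using \<open>m \<in> M\<close> W(1) by (rule Uapp_closed[rotated])
  have "j \<le> b" "j \<noteq> a - 1"
    using \<open>j \<in> J\<close> assms(6,7) by auto
  then consider "j = a" | "a < j" "j \<le> b" | "j + 2 \<le> a"
    by atomize_elim presburger
  then show "U j (Uapp U ([a..<Suc b] @ W) m) = Uapp U ([a..<Suc b] @ W) m"
  proof cases
    case 1
    then show ?thesis
      using U_Uapp_upt_absorb[OF assms(1-3) \<open>?Y \<in> M\<close>] by (simp add: Uapp_append)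
  next
    case 2
    then have "j - 1 \<in> {a..b} - {b}"
      by auto
    then have "j - 1 \<in> J - {b}"
      using assms(5) by blast
    with W(2) \<open>m \<in> M\<close> have "U (j - 1) ?Y = ?Y"
      by (simp add: absorbs_def)
    moreover have "U j (Uapp U [a..<Suc b] ?Y) = Uapp U [a..<Suc b] (U (j - 1) ?Y)"
      using U_Uapp_upt_shift[of a "j - 1" b ?Y] 2 assms(1,3) \<open>?Y \<in> M\<close> by simp
    ultimately show ?thesis
      by (simp add: Uapp_append)
  next
    case 3
    then have "U j (Uapp U [a..<Suc b] ?Y) = Uapp U [a..<Suc b] (U j ?Y)"
      using \<open>j \<in> J\<close> assms(1,3,4) \<open>?Y \<in> M\<close> by (intro U_Uapp_commute) auto
    also have "U j ?Y = ?Y"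
      using W(2) 3 \<open>j \<in> J\<close> assms(2) \<open>m \<in> M\<close> by (auto simp: absorbs_def)
    finally show ?thesis
      by (simp add: Uapp_append)
  qed
qed

text \<open>The absorbing word is a reduced word for the longest element of the parabolic subgroup
  generated by the \<open>s j\<close>, \<open>j \<in> J\<close>: the staircase \<open>[a..<Suc b]\<close> for the top maximal interval
  \<open>{a..b}\<close> of \<open>J\<close>, followed by such a word for \<open>J - {b}\<close>.\<close>

lemma absorbing_word_exists:
  assumes "J \<subseteq> {1..<n}"
  shows "\<exists>W. set W \<subseteq> J \<and> absorbs J W"
  using finite_subset[OF assms finite_atLeastLessThan] assms
proof (induction J rule: finite_remove_induct)
  case empty
  show ?case
    by (intro exI[of _ "[]"]) (simp add: absorbs_def)
next
  case (remove A)
  define b where "b = Max A"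
  define a where "a = (LEAST a. {a..b} \<subseteq> A)"
  have "b \<in> A" "\<forall>j\<in>A. j \<le> b"
    using remove.hyps by (simp_all add: b_def)
  have interval: "{a..b} \<subseteq> A"
    unfolding a_def by (rule LeastI[of _ b]) (use \<open>b \<in> A\<close> in simp)
  have "a \<le> b"
    unfolding a_def by (rule Least_le) (use \<open>b \<in> A\<close> in simp)
  with interval have "a \<in> A" "b \<in> A"
    by auto
  with remove.prems have "1 \<le> a" "b < n"
    by auto
  have "a - 1 \<notin> A"
  proof
    assume "a - 1 \<in> A"
    moreover have "{a - 1..b} = insert (a - 1) {a..b}"
      using \<open>1 \<le> a\<close> \<open>a \<le> b\<close> by auto
    ultimately have "{a - 1..b} \<subseteq> A"
      using interval by simp
    then show False
      using not_less_Least[of "a - 1" "\<lambda>a. {a..b} \<subseteq> A"] \<open>1 \<le> a\<close> a_def by auto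
  qed
  obtain W where W: "set W \<subseteq> A - {b}" "absorbs (A - {b}) W"
    using remove.IH[OF \<open>b \<in> A\<close>] remove.prems by blast
  then have "set W \<subseteq> {1..<n}"
    using remove.prems by blast
  from absorbs_upt_append[OF \<open>1 \<le> a\<close> \<open>a \<le> b\<close> \<open>b < n\<close> remove.prems interval \<open>a - 1 \<notin> A\<close>
      \<open>\<forall>j\<in>A. j \<le> b\<close> this W(2)]
  show ?case
    using interval W(1) by (intro exI[of _ "[a..<Suc b] @ W"]) auto
qed

lemma absorbing_word_retracts:
  assumes "set w \<subseteq> {1..<n}" "set W \<subseteq> set w" "absorbs (set w) W" "x \<in> M"
  shows "Uapp U W x \<in> M" "Uapp U w (Uapp U W x) = Uapp U W x"
    and "k \<in> {1..<n} - set w \<Longrightarrow> Uapp U W x ! k = x ! k"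
proof -
  show "Uapp U W x \<in> M"
    using assms(1,2,4) by (intro Uapp_closed) auto
  show "Uapp U w (Uapp U W x) = Uapp U W x"
    using assms(3,4) by (intro Uapp_fixed) (simp add: absorbs_def)
  show "Uapp U W x ! k = x ! k" if "k \<in> {1..<n} - set w"
    using that assms(1,2,4) by (intro Uapp_nth_other) auto
qed

end

section \<open>Restless paths to the sink\<close>

text \<open>\<open>z\<close> plays the role of \<open>m\<^sub>0\<close>. In \<open>no_bowtie\<close> the chains \<open>x1\<close>, \<open>x2\<close>, \<open>x3\<close>, \<open>x4\<close> pass
  through \<open>(p, q)\<close>, \<open>(p, q')\<close>, \<open>(p', q)\<close>, \<open>(p', q')\<close> at the ranks \<open>i\<close>, \<open>i + 1\<close>.\<close>

locale bowtie_free_hecke_action = zero_hecke_action M n U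
  for M :: "'b list set" and n U +
  fixes z :: "'b list"
  assumes finite_M: "finite M"
    and sink_in_M: "z \<in> M"
    and fixed_iff_sink: "m \<in> M \<Longrightarrow> (\<forall>i\<in>{1..<n}. U i m = m) \<longleftrightarrow> m = z"
    and no_restless_cycle:
      "m \<in> M \<Longrightarrow> w \<noteq> [] \<Longrightarrow> set w \<subseteq> {1..<n} \<Longrightarrow> restless U w m \<Longrightarrow> Uapp U w m \<noteq> m"
    and no_bowtie: "1 \<le> i \<Longrightarrow> i + 1 < n \<Longrightarrow> x1 \<in> M \<Longrightarrow> x2 \<in> M \<Longrightarrow> x3 \<in> M \<Longrightarrow> x4 \<in> M \<Longrightarrow>
      x1 ! i = x2 ! i \<Longrightarrow> x3 ! i = x4 ! i \<Longrightarrow> x1 ! (i + 1) = x3 ! (i + 1) \<Longrightarrow> x2 ! (i + 1) = x4 ! (i + 1) \<Longrightarrow>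
      x1 ! i = x3 ! i \<or> x1 ! (i + 1) = x2 ! (i + 1)"
begin

definition restless_path :: "'b list \<Rightarrow> nat list \<Rightarrow> bool" where
  "restless_path m w \<longleftrightarrow> set w \<subseteq> {1..<n} \<and> restless U w m \<and> Uapp U w m = z"

definition moves :: "('b list \<times> 'b list) set" where
  "moves = {(U i m, m) | i m. i \<in> {1..<n} \<and> m \<in> M \<and> U i m \<noteq> m}"

definition omega :: "'b list \<Rightarrow> nat \<Rightarrow> nat" where
  "omega m = (THE \<sigma>. \<exists>w. set w \<subseteq> {1..<n} \<and> restless U w m \<and> Uapp U w m = z \<and> \<sigma> = sprod w)"

lemma restless_path_Nil [simp]: "restless_path m [] \<longleftrightarrow> m = z"
  by (simp add: restless_path_def)

lemma restless_path_append:
  "restless_path m (v @ w) \<longleftrightarrow> set w \<subseteq> {1..<n} \<and> restless U w m \<and> restless_path (Uapp U w m) v"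
  by (auto simp: restless_path_def restless_append Uapp_append)

lemma restless_path_snoc:
  "restless_path m (w @ [i]) \<longleftrightarrow> i \<in> {1..<n} \<and> U i m \<noteq> m \<and> restless_path (U i m) w"
  by (simp add: restless_path_append)

lemma restless_path_sink: "restless_path z w \<Longrightarrow> w = []"
  using fixed_iff_sink[OF sink_in_M] by (cases w rule: rev_exhaust) (auto simp: restless_path_snoc)

lemma moves_trancl:
  "(x, m) \<in> moves\<^sup>+ \<Longrightarrow> m \<in> M \<and> (\<exists>w. w \<noteq> [] \<and> set w \<subseteq> {1..<n} \<and> restless U w m \<and> Uapp U w m = x)"
proof (induction rule: converse_trancl_induct)
  case (base x)
  then obtain i where "x = U i m" "i \<in> {1..<n}" "m \<in> M" "U i m \<noteq> m"
    by (auto simp: moves_def)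
  then show ?case
    by (intro conjI exI[of _ "[i]"]) auto
next
  case (step x y)
  then obtain i where "x = U i y" "i \<in> {1..<n}" "y \<in> M" "U i y \<noteq> y"
    by (auto simp: moves_def)
  moreover obtain w where "w \<noteq> []" "set w \<subseteq> {1..<n}" "restless U w m" "Uapp U w m = y"
    using step.IH by blast
  ultimately show ?case
    using step.IH by (intro conjI exI[of _ "i # w"]) auto
qed

lemma wf_moves: "wf moves"
proof (rule finite_acyclic_wf)
  show "finite moves"
    by (rule finite_subset[of _ "M \<times> M"]) (auto simp: moves_def finite_M U_closed)
  show "acyclic moves"
    unfolding acyclic_def using moves_trancl no_restless_cycle by blast
qed

lemma restless_path_exists: "m \<in> M \<Longrightarrow> \<exists>w. restless_path m w"
proof (induction m rule: wf_induct_rule[OF wf_moves])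
  case (1 m)
  show ?case
  proof (cases "m = z")
    case False
    then obtain i where i: "i \<in> {1..<n}" "U i m \<noteq> m"
      using fixed_iff_sink[OF "1.prems"] by blast
    then have "(U i m, m) \<in> moves"
      using "1.prems" by (auto simp: moves_def)
    then obtain w where "restless_path (U i m) w"
      using 1 i U_closed by blast
    with i have "restless_path m (w @ [i])"
      by (simp add: restless_path_snoc)
    then show ?thesis ..
  qed (use restless_path_Nil in blast)
qed

lemma far_moves_restless:
  assumes "i \<in> {1..<n}" "j \<in> {1..<n}" "i + 2 \<le> j \<or> j + 2 \<le> i"
    and "m \<in> M" "U i m \<noteq> m" "U j m \<noteq> m"
  shows "U j (U i m) \<noteq> U i m"
proof
  assume "U j (U i m) = U i m"
  then have "U i (U j m) ! j = U i m ! j"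
    using assms U_commute[of i j m] by simp
  moreover have "U i (U j m) ! j = U j m ! j" "U i m ! j = m ! j"
    using assms by (auto intro!: U_nth_other simp: U_closed length_M)
  ultimately have "U j m ! j = m ! j"
    by simp
  with U_changes_nth[OF assms(2,4,6)] show False ..
qed

lemma no_bowtie_adjacent:
  assumes "i = j + 1 \<or> j = i + 1" "i \<in> {1..<n}" "j \<in> {1..<n}"
    and "x1 \<in> M" "x2 \<in> M" "x3 \<in> M" "x4 \<in> M"
    and "x1 ! i = x2 ! i" "x3 ! i = x4 ! i" "x1 ! j = x3 ! j" "x2 ! j = x4 ! j"
  shows "x1 ! i = x3 ! i \<or> x1 ! j = x2 ! j"
  using assms(1)
proof
  assume "i = j + 1"
  then show ?thesis
    using assms no_bowtie[of j x1 x3 x2 x4] by auto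
qed (use assms no_bowtie[of i x1 x2 x3 x4] in auto)

text \<open>A stalled side of the hexagon would make \<open>m\<close>, \<open>U i m\<close>, \<open>U j m\<close> and \<open>U i (U j m)\<close> a bowtie.\<close>

lemma adjacent_moves_restless:
  assumes adj: "i = j + 1 \<or> j = i + 1" and ij: "i \<in> {1..<n}" "j \<in> {1..<n}"
    and m: "m \<in> M" "U i m \<noteq> m" "U j m \<noteq> m"
  shows "U j (U i m) \<noteq> U i m \<and> U i (U j (U i m)) \<noteq> U j (U i m)"
proof -
  let ?b = "U i (U j m)"
  have "i \<noteq> j"
    using adj by auto
  have keeps_i: "U j y ! i = y ! i" if "y \<in> M" for y
    using that ij \<open>i \<noteq> j\<close> by (simp add: U_nth_other length_M)
  have keeps_j: "U i y ! j = y ! j" if "y \<in> M" for y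
    using that ij \<open>i \<noteq> j\<close> by (simp add: U_nth_other length_M)
  have "?b ! i \<noteq> U i m ! i"
  proof
    assume "?b ! i = U i m ! i"
    then have "m ! i = U i m ! i \<or> m ! j = U j m ! j"
      using no_bowtie_adjacent[OF adj ij m(1), of "U j m" "U i m" ?b] ij m keeps_i keeps_j
      by (simp add: U_closed)
    with U_changes_nth[OF ij(1) m(1,2)] U_changes_nth[OF ij(2) m(1,3)] show False
      by auto
  qed
  moreover have "U i (U j (U i m)) = U j ?b"
    using U_braid_sym[OF adj ij m(1)] .
  moreover have "?b \<in> M" "U i m \<in> M"
    using ij m(1) by (simp_all add: U_closed)
  ultimately show ?thesis
    using keeps_i[of ?b] keeps_i[of "U i m"] U_idem[OF ij(1) m(1)] by metis
qed

lemma moves_join_far: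
  assumes "m \<in> M" "i \<in> {1..<n}" "j \<in> {1..<n}" "U i m \<noteq> m" "U j m \<noteq> m"
    and far: "i + 2 \<le> j \<or> j + 2 \<le> i"
  obtains p where "restless_path (U i m) (p @ [j])" "restless_path (U j m) (p @ [i])"
    and "sprod (p @ [j]) \<circ> s i = sprod (p @ [i]) \<circ> s j"
proof -
  have "U j (U i m) \<noteq> U i m" "U i (U j m) \<noteq> U j m"
    using far_moves_restless[OF assms(2,3) far assms(1,4,5)]
      far_moves_restless[OF assms(3,2) _ assms(1,5,4)] far by auto
  moreover have "U j (U i m) = U i (U j m)"
    using U_commute[OF assms(3,2) _ assms(1)] far by auto
  moreover obtain p where "restless_path (U j (U i m)) p"
    using restless_path_exists[of "U j (U i m)"] assms by (auto simp: U_closed)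
  ultimately have "restless_path (U i m) (p @ [j])" "restless_path (U j m) (p @ [i])"
    using assms(2,3) by (simp_all add: restless_path_snoc)
  moreover have "sprod (p @ [j]) \<circ> s i = sprod (p @ [i]) \<circ> s j"
    using s_comp_commute[OF far] by (simp add: sprod_snoc comp_assoc)
  ultimately show ?thesis
    using that by blast
qed

lemma moves_join_adjacent:
  assumes "m \<in> M" "i \<in> {1..<n}" "j \<in> {1..<n}" "U i m \<noteq> m" "U j m \<noteq> m"
    and adj: "i = j + 1 \<or> j = i + 1"
  obtains p where "restless_path (U i m) (p @ [i, j])" "restless_path (U j m) (p @ [j, i])"
    and "sprod (p @ [i, j]) \<circ> s i = sprod (p @ [j, i]) \<circ> s j"
proof -
  have adj': "j = i + 1 \<or> i = j + 1"
    using adj by auto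
  have "U j (U i m) \<noteq> U i m \<and> U i (U j (U i m)) \<noteq> U j (U i m)"
    "U i (U j m) \<noteq> U j m \<and> U j (U i (U j m)) \<noteq> U i (U j m)"
    using adjacent_moves_restless[OF adj assms(2,3,1,4,5)]
      adjacent_moves_restless[OF adj' assms(3,2,1,5,4)] .
  moreover have "U i (U j (U i m)) = U j (U i (U j m))"
    using U_braid_sym[OF adj assms(2,3,1)] .
  moreover obtain p where "restless_path (U i (U j (U i m))) p"
    using restless_path_exists[of "U i (U j (U i m))"] assms by (auto simp: U_closed)
  ultimately have "restless_path (U i m) (p @ [i, j])" "restless_path (U j m) (p @ [j, i])"
    using assms(2,3) by (simp_all add: restless_path_append)
  moreover have "sprod (p @ [i, j]) \<circ> s i = sprod (p @ [j, i]) \<circ> s j"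
    using s_comp_braid[OF adj] by (simp add: sprod_append comp_assoc)
  ultimately show ?thesis
    using that by blast
qed

lemma moves_join:
  assumes "m \<in> M" "i \<in> {1..<n}" "j \<in> {1..<n}" "U i m \<noteq> m" "U j m \<noteq> m"
  shows "\<exists>v v'. restless_path (U i m) v \<and> restless_path (U j m) v' \<and> sprod v \<circ> s i = sprod v' \<circ> s j"
proof -
  consider "i = j" | "i + 2 \<le> j \<or> j + 2 \<le> i" | "i = j + 1 \<or> j = i + 1"
    by linarith
  then show ?thesis
  proof cases
    case 1
    obtain v where "restless_path (U i m) v"
      using restless_path_exists[OF U_closed[OF assms(2,1)]] ..
    with 1 show ?thesis
      by blast
  next
    case 2
    from moves_join_far[OF assms this] show ?thesis
      by metis
  next
    case 3
    from moves_join_adjacent[OF assms this] show ?thesis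
      by metis
  qed
qed

lemma restless_paths_sprod_eq:
  assumes "m \<in> M" "restless_path m w" "restless_path m w'"
  shows "sprod w = sprod w'"
  using assms
proof (induction m arbitrary: w w' rule: wf_induct_rule[OF wf_moves])
  case (1 m)
  show ?case
  proof (cases "m = z")
    case True
    then have "w = []" "w' = []"
      using "1.prems" restless_path_sink by blast+
    then show ?thesis
      by simp
  next
    case False
    then obtain v i v' j where w: "w = v @ [i]" and w': "w' = v' @ [j]"
      using "1.prems" by (metis restless_path_Nil rev_exhaust)
    then have i: "i \<in> {1..<n}" "U i m \<noteq> m" "restless_path (U i m) v"
      and j: "j \<in> {1..<n}" "U j m \<noteq> m" "restless_path (U j m) v'"
      using "1.prems" by (simp_all add: restless_path_snoc)
    obtain u u' where u: "restless_path (U i m) u" "restless_path (U j m) u'"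
      and join: "sprod u \<circ> s i = sprod u' \<circ> s j"
      using moves_join "1.prems"(1) i j by blast
    have "(U i m, m) \<in> moves" "(U j m, m) \<in> moves"
      using "1.prems"(1) i j by (auto simp: moves_def)
    then have "sprod v = sprod u" "sprod v' = sprod u'"
      using "1.IH" i j u "1.prems"(1) U_closed by blast+
    then show ?thesis
      using join by (simp add: w w' sprod_snoc)
  qed
qed

lemma omega_eq_sprod:
  assumes "m \<in> M" "restless_path m w"
  shows "omega m = sprod w"
  unfolding omega_def
proof (rule the_equality)
  show "\<exists>w'. set w' \<subseteq> {1..<n} \<and> restless U w' m \<and> Uapp U w' m = z \<and> sprod w = sprod w'"
    using assms(2) unfolding restless_path_def by blast
  show "\<sigma> = sprod w" if "\<exists>w'. set w' \<subseteq> {1..<n} \<and> restless U w' m \<and> Uapp U w' m = z \<and> \<sigma> = sprod w'"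
    for \<sigma>
    using that restless_paths_sprod_eq[OF assms] unfolding restless_path_def by metis
qed

lemma omega_sink: "omega z = id"
  using omega_eq_sprod[OF sink_in_M, of "[]"] by simp

lemma omega_factor_move:
  assumes "m \<in> M" "i \<in> {1..<n}" "U i m \<noteq> m"
  shows "omega m = omega (U i m) \<circ> s i"
proof -
  obtain v where v: "restless_path (U i m) v"
    using restless_path_exists assms U_closed by blast
  then have "restless_path m (v @ [i])"
    using assms by (simp add: restless_path_snoc)
  then show ?thesis
    using omega_eq_sprod assms v U_closed by (simp add: sprod_snoc)
qed

lemma omega_move:
  assumes "m \<in> M" "i \<in> {1..<n}" "U i m \<noteq> m"
  shows "omega (U i m) = omega m \<circ> s i"
  by (simp add: omega_factor_move[OF assms] comp_assoc s_comp_s)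

lemma omega_ascent_step_far:
  assumes m: "m \<in> M" "k \<in> {1..<n}" "U k m = m" and i: "i \<in> {1..<n}" "U i m \<noteq> m"
    and far: "i + 2 \<le> k \<or> k + 2 \<le> i"
    and IH: "\<And>y j. (y, m) \<in> moves\<^sup>+ \<Longrightarrow> y \<in> M \<Longrightarrow> j \<in> {1..<n} \<Longrightarrow> U j y = y
      \<Longrightarrow> omega y j < omega y (j + 1)"
  shows "omega m k < omega m (k + 1)"
proof -
  have "(U i m, m) \<in> moves\<^sup>+" "U i m \<in> M"
    using m(1) i by (auto simp: moves_def U_closed)
  moreover have "U k (U i m) = U i m"
    using U_commute[OF m(2) i(1) _ m(1)] far m(3) by auto
  ultimately have "omega (U i m) k < omega (U i m) (k + 1)"
    using IH m(2) by blast
  with far show ?thesis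
    by (auto simp: omega_factor_move[OF m(1) i] s_def transpose_def)
qed

lemma omega_ascent_step_adjacent:
  assumes m: "m \<in> M" "k \<in> {1..<n}" "U k m = m" and i: "i \<in> {1..<n}" "U i m \<noteq> m"
    and adj: "i = k + 1 \<or> k = i + 1"
    and IH: "\<And>y j. (y, m) \<in> moves\<^sup>+ \<Longrightarrow> y \<in> M \<Longrightarrow> j \<in> {1..<n} \<Longrightarrow> U j y = y
      \<Longrightarrow> omega y j < omega y (j + 1)"
  shows "omega m k < omega m (k + 1)"
proof -
  define a where "a = U i m"
  define x where "x = U k a"
  have a: "a \<in> M" "(a, m) \<in> moves\<^sup>+"
    using m(1) i by (auto simp: a_def moves_def U_closed)
  have omega_m: "omega m = omega a \<circ> s i"
    using omega_factor_move[OF m(1) i] by (simp add: a_def)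
  have "U i x = x"
    using U_braid_sym[OF adj i(1) m(2,1)] m(3) by (simp add: x_def a_def)
  show ?thesis
  proof (cases "x = a")
    case True
    have "U i a = a"
      using U_idem[OF i(1) m(1)] by (simp add: a_def)
    then have "omega a i < omega a (i + 1)" "omega a k < omega a (k + 1)"
      using IH[OF a(2,1)] True i(1) m(2) by (simp_all add: x_def)
    with adj show ?thesis
      by (auto simp: omega_m s_def transpose_def)
  next
    case False
    then have "(x, a) \<in> moves"
      using a(1) m(2) by (auto simp: x_def moves_def)
    with a have "(x, m) \<in> moves\<^sup>+" "x \<in> M"
      using m(2) by (auto simp: x_def U_closed)
    then have "omega x i < omega x (i + 1)"
      using IH \<open>U i x = x\<close> i(1) by blast
    moreover have "omega a = omega x \<circ> s k"
      using omega_factor_move[OF a(1) m(2)] False by (simp add: x_def)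
    ultimately show ?thesis
      using adj by (auto simp: omega_m s_def transpose_def)
  qed
qed

lemma omega_ascent_if_fixed:
  assumes "m \<in> M" "k \<in> {1..<n}" "U k m = m"
  shows "omega m k < omega m (k + 1)"
  using assms
proof (induction m arbitrary: k rule: wf_induct_rule[OF wf_trancl[OF wf_moves]])
  case (1 m)
  show ?case
  proof (cases "m = z")
    case False
    then obtain i where i: "i \<in> {1..<n}" "U i m \<noteq> m"
      using fixed_iff_sink[OF "1.prems"(1)] by blast
    then have "k \<noteq> i"
      using "1.prems"(3) by auto
    then consider "i + 2 \<le> k \<or> k + 2 \<le> i" | "i = k + 1 \<or> k = i + 1"
      by linarith
    then show ?thesis
      using omega_ascent_step_far[OF "1.prems" i] omega_ascent_step_adjacent[OF "1.prems" i] "1.IH"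
      by cases blast+
  qed (simp add: omega_sink)
qed

lemma omega_descent_iff_move:
  assumes "m \<in> M" "i \<in> {1..<n}"
  shows "has_descent (omega m) i \<longleftrightarrow> U i m \<noteq> m"
proof
  show "U i m \<noteq> m" if "has_descent (omega m) i"
    using that omega_ascent_if_fixed[OF assms] by (auto simp: has_descent_def)
next
  assume "U i m \<noteq> m"
  moreover have "omega (U i m) i < omega (U i m) (i + 1)"
    using assms by (intro omega_ascent_if_fixed) (simp_all add: U_closed U_idem)
  ultimately show "has_descent (omega m) i"
    using omega_factor_move[OF assms] by (simp add: has_descent_def s_def)
qed

lemma length_restless_path:
  "m \<in> M \<Longrightarrow> restless_path m w \<Longrightarrow> length w = inv_count n (omega m)"
proof (induction w arbitrary: m rule: rev_induct)
  case Nil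
  then show ?case
    by (metis restless_path_Nil omega_sink inv_count_id list.size(3))
next
  case (snoc i w)
  then have i: "i \<in> {1..<n}" "U i m \<noteq> m" and "restless_path (U i m) w"
    by (simp_all add: restless_path_snoc)
  then have "length w = inv_count n (omega (U i m))"
    using snoc.IH snoc.prems(1) U_closed by blast
  moreover have "omega (U i m) i < omega (U i m) (i + 1)"
    using snoc.prems(1) i by (intro omega_ascent_if_fixed) (simp_all add: U_closed U_idem)
  ultimately show ?case
    using inv_count_comp_s_ascent[of i n "omega (U i m)"] i omega_factor_move[OF snoc.prems(1) i]
    by (simp add: comp_def)
qed

lemma reduced_word_restless_path:
  "m \<in> M \<Longrightarrow> set w \<subseteq> {1..<n} \<Longrightarrow> sprod w = omega m \<Longrightarrow> length w = inv_count n (omega m)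
    \<Longrightarrow> restless_path m w"
proof (induction w arbitrary: m rule: rev_induct)
  case Nil
  then have "omega m = id"
    by (simp add: fun_eq_iff)
  then have "U i m = m" if "i \<in> {1..<n}" for i
    using omega_descent_iff_move[OF Nil(1) that] by (simp add: has_descent_def)
  then show ?case
    using fixed_iff_sink[OF Nil(1)] by simp
next
  case (snoc j w)
  have \<sigma>: "omega m = sprod (w @ [j])"
    using snoc.prems(3) by (simp add: fun_eq_iff)
  have j: "j \<in> {1..<n}" and w: "set w \<subseteq> {1..<n}"
    using snoc.prems(2) by auto
  have "length (w @ [j]) = inv_count n (sprod (w @ [j]))"
    using snoc.prems(4) \<sigma> by simp
  note last = reduced_word_last_descent[OF snoc.prems(2) this, folded \<sigma>]
  then have move: "U j m \<noteq> m"
    using omega_descent_iff_move[OF snoc.prems(1) j] by simp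
  then have "omega (U j m) = sprod w"
    using omega_move[OF snoc.prems(1) j] \<sigma> by (simp add: sprod_snoc comp_assoc s_comp_s)
  then have "restless_path (U j m) w"
    using snoc.IH[OF U_closed[OF j snoc.prems(1)] w] last(2) by simp
  with j move show ?case
    by (simp add: restless_path_snoc)
qed

lemma restless_path_iff_reduced_expr:
  assumes "m \<in> M" "set w \<subseteq> {1..<n}"
  shows "restless U w m \<and> Uapp U w m = z \<longleftrightarrow> reduced_expr n w (omega m)"
  using assms omega_eq_sprod length_restless_path reduced_word_restless_path
  unfolding reduced_expr_def restless_path_def by metis

end

section \<open>Maximal chains of a graded poset\<close>

lemma is_chain_subset: "is_chain T \<Longrightarrow> S \<subseteq> T \<Longrightarrow> is_chain S"
  unfolding is_chain_def by blast

lemma is_chain_Un: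
  "is_chain S \<Longrightarrow> is_chain T \<Longrightarrow> (\<And>x y. x \<in> S \<Longrightarrow> y \<in> T \<Longrightarrow> x \<le> y) \<Longrightarrow> is_chain (S \<union> T)"
  unfolding is_chain_def by blast

lemma chain_extends_to_maximal:
  "is_chain (C :: 'a::{order,finite} set) \<Longrightarrow> \<exists>S. maximal_chain S \<and> C \<subseteq> S"
proof (induction "card (UNIV :: 'a set) - card C" arbitrary: C rule: less_induct)
  case less
  show ?case
  proof (cases "maximal_chain C")
    case False
    then obtain T where T: "is_chain T" "C \<subset> T"
      using less.prems unfolding maximal_chain_def by blast
    then have "card (UNIV :: 'a set) - card T < card (UNIV :: 'a set) - card C"
      using psubset_card_mono[OF finite T(2)] card_mono[OF finite subset_UNIV, of T] by linarith
    then show ?thesis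
      using less.hyps T by (meson psubset_imp_subset order_trans)
  qed blast
qed

lemma sorted_list_of_chain:
  "finite S \<Longrightarrow> is_chain (S :: 'a::order set) \<Longrightarrow> \<exists>l. sorted_wrt (<) l \<and> set l = S"
proof (induction S rule: finite_induct)
  case (insert x S)
  then obtain l where l: "sorted_wrt (<) l" "set l = S"
    using is_chain_subset by blast
  have "y < x \<or> x < y" if "y \<in> S" for y
    using insert.hyps(2) insert.prems that unfolding is_chain_def by (metis insertCI order.order_iff_strict)
  then have "sorted_wrt (<) (filter (\<lambda>y. y < x) l @ x # filter (\<lambda>y. x < y) l)"
    "set (filter (\<lambda>y. y < x) l @ x # filter (\<lambda>y. x < y) l) = insert x S"
    using l by (auto simp: sorted_wrt_append sorted_wrt_filter intro: less_trans)
  then show ?case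
    by blast
qed simp

lemma sorted_nth_mono:
  "sorted_wrt (<) (l :: 'a::order list) \<Longrightarrow> i \<le> j \<Longrightarrow> j < length l \<Longrightarrow> l ! i \<le> l ! j"
  by (metis order.order_iff_strict sorted_wrt_nth_less)

lemma sorted_mem_split:
  assumes "sorted_wrt (<) (l :: 'a::order list)" "k + 1 < length l" "y \<in> set l"
  shows "y \<le> l ! k \<or> l ! (k + 1) \<le> y"
proof -
  obtain j where "j < length l" "y = l ! j"
    using assms(3) by (auto simp: in_set_conv_nth)
  then show ?thesis
    using sorted_nth_mono[OF assms(1)] assms(2) by (cases "j \<le> k") auto
qed

context
  fixes n :: nat
  assumes graded: "graded_rank TYPE('a::{order,finite}) n"
begin

lemma card_chain_le: "is_chain (C :: 'a set) \<Longrightarrow> card C \<le> n + 1"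
  using chain_extends_to_maximal graded card_mono[OF finite] unfolding graded_rank_def by metis

lemma mchainsD:
  assumes "l \<in> mchains TYPE('a)"
  shows "sorted_wrt (<) l" "is_chain (set l)" "distinct l" "length l = n + 1"
proof -
  show "sorted_wrt (<) l"
    using assms by (simp add: mchains_def)
  then show "distinct l"
    by (induction l) auto
  show "is_chain (set l)"
    using assms by (simp add: mchains_def maximal_chain_def)
  have "card (set l) = n + 1"
    using assms graded by (simp add: mchains_def graded_rank_def)
  with \<open>distinct l\<close> show "length l = n + 1"
    by (simp add: distinct_card)
qed

lemma covers_nth:
  assumes l: "l \<in> mchains TYPE('a)" and k: "k + 1 < length l"
  shows "covers (l ! (k + 1)) (l ! k)"
  unfolding covers_def
proof (intro conjI notI)
  note l_props = mchainsD[OF l]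
  show "l ! k < l ! (k + 1)"
    using l_props(1) k by (simp add: sorted_wrt_nth_less)
  assume "\<exists>x. l ! k < x \<and> x < l ! (k + 1)"
  then obtain x where x: "l ! k < x" "x < l ! (k + 1)"
    by blast
  have "y < x \<or> x < y" if "y \<in> set l" for y
    using sorted_mem_split[OF l_props(1) k that] x by (auto intro: le_less_trans less_le_trans)
  then have "is_chain (insert x (set l))" "x \<notin> set l"
    using l_props(2) unfolding is_chain_def by (auto intro: less_imp_le)
  then show False
    using card_chain_le[of "insert x (set l)"] l_props(3,4) by (simp add: distinct_card)
qed

lemma card_chain_below_nth_le:
  assumes l: "l \<in> mchains TYPE('a)" and k: "k < length l"
    and S: "is_chain S" "\<forall>y\<in>S. y \<le> l ! k"
  shows "card S \<le> k + 1"
proof -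
  note l_props = mchainsD[OF l]
  let ?D = "set (drop (Suc k) l)"
  have above: "l ! k < y" if "y \<in> ?D" for y
    using that l_props(1) k by (auto simp: in_set_conv_nth sorted_wrt_nth_less)
  have "s \<le> d" if "s \<in> S" "d \<in> ?D" for s d
    using S(2) above[OF that(2)] that(1) by (meson less_imp_le order_trans)
  then have "is_chain (S \<union> ?D)"
    using S(1) is_chain_subset[OF l_props(2) set_drop_subset] by (intro is_chain_Un)
  moreover have "S \<inter> ?D = {}"
    using S(2) above by (auto dest: leD)
  moreover have "card ?D = n - k"
    using distinct_card[of "drop (Suc k) l"] l_props(3,4) by simp
  ultimately have "card S + (n - k) \<le> n + 1"
    using card_chain_le[of "S \<union> ?D"] card_Un_disjoint[OF finite finite] by metis
  then show ?thesis
    using k l_props(4) by simp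
qed

lemma rank_nth:
  assumes l: "l \<in> mchains TYPE('a)" and k: "k < length l"
  shows "rank (l ! k) = k"
proof -
  note l_props = mchainsD[OF l]
  let ?A = "{card S - 1 | S. is_chain S \<and> S \<noteq> {} \<and> (\<forall>y\<in>S. y \<le> l ! k)}"
  have "?A \<subseteq> {..n}"
    using card_chain_le by fastforce
  then have "finite ?A"
    by (rule finite_subset) simp
  moreover have "k \<in> ?A"
  proof -
    let ?S = "set (take (Suc k) l)"
    have "is_chain ?S"
      using is_chain_subset[OF l_props(2) set_take_subset] .
    moreover have "\<forall>y\<in>?S. y \<le> l ! k"
      using sorted_nth_mono[OF l_props(1)] k by (auto simp: in_set_conv_nth)
    moreover have "card ?S = Suc k"
      using distinct_card[of "take (Suc k) l"] l_props(3) k by simp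
    ultimately show ?thesis
      by (intro CollectI exI[of _ ?S]) auto
  qed
  moreover have "x \<le> k" if "x \<in> ?A" for x
    using that card_chain_below_nth_le[OF l k] by fastforce
  ultimately show ?thesis
    unfolding rank_def by (intro Max_eqI) auto
qed

lemma chain_eq_nth_image_rank:
  assumes "is_chain (C :: 'a set)"
  shows "\<exists>l\<in>mchains TYPE('a). C = (\<lambda>k. l ! k) ` rank ` C"
proof -
  obtain S where S: "maximal_chain S" "C \<subseteq> S"
    using chain_extends_to_maximal[OF assms] by blast
  then have "is_chain S"
    by (simp add: maximal_chain_def)
  then obtain l where l: "sorted_wrt (<) l" "set l = S"
    using sorted_list_of_chain[OF finite] by blast
  then have "l \<in> mchains TYPE('a)"
    using S(1) by (simp add: mchains_def)
  moreover have "l ! rank c = c" if c: "c \<in> C" for c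
  proof -
    have "c \<in> set l"
      using c S(2) l(2) by blast
    then obtain j where "j < length l" "c = l ! j"
      by (auto simp: in_set_conv_nth)
    then show ?thesis
      using rank_nth[OF \<open>l \<in> mchains TYPE('a)\<close>] by simp
  qed
  then have "C = (\<lambda>k. l ! k) ` rank ` C"
    by (force simp: image_image)
  ultimately show ?thesis
    by blast
qed

lemma finite_mchains: "finite (mchains TYPE('a))"
proof (rule finite_subset)
  show "mchains TYPE('a) \<subseteq> {l. set l \<subseteq> UNIV \<and> length l = n + 1}"
    using mchainsD by blast
qed (rule finite_lists_length_eq[OF finite])

lemma mchains_no_bowtie:
  assumes "bowtie_free TYPE('a)" "1 \<le> i" "i + 1 < n"
    and x: "x1 \<in> mchains TYPE('a)" "x2 \<in> mchains TYPE('a)" "x3 \<in> mchains TYPE('a)" "x4 \<in> mchains TYPE('a)"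
    and eq: "x1 ! i = x2 ! i" "x3 ! i = x4 ! i" "x1 ! (i + 1) = x3 ! (i + 1)" "x2 ! (i + 1) = x4 ! (i + 1)"
  shows "x1 ! i = x3 ! i \<or> x1 ! (i + 1) = x2 ! (i + 1)"
proof (rule ccontr)
  assume ne: "\<not> ?thesis"
  have "covers (x ! (i + 1)) (x ! i)" if "x \<in> mchains TYPE('a)" for x
    using that covers_nth mchainsD(4) assms(3) by simp
  then have "covers (x1 ! (i + 1)) (x1 ! i)" "covers (x1 ! (i + 1)) (x3 ! i)"
    "covers (x2 ! (i + 1)) (x1 ! i)" "covers (x2 ! (i + 1)) (x3 ! i)"
    using x eq by metis+
  moreover from this have "distinct [x1 ! (i + 1), x2 ! (i + 1), x1 ! i, x3 ! i]"
    using ne by (auto simp: covers_def)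
  ultimately show False
    using assms(1) unfolding bowtie_free_def by blast
qed

lemma mchains_nonempty: "mchains TYPE('a) \<noteq> {}"
proof -
  obtain S :: "'a set" where S: "maximal_chain S"
    using chain_extends_to_maximal[of "{}"] by (auto simp: is_chain_def)
  then have "is_chain S"
    by (simp add: maximal_chain_def)
  then obtain l where "sorted_wrt (<) l" "set l = S"
    using sorted_list_of_chain[OF finite] by blast
  with S show ?thesis
    by (auto simp: mchains_def)
qed

end

section \<open>Fixed points and the flag \<open>f\<close>-vector\<close>

lemma sum_L_fund:
  assumes "T \<subseteq> {1..<n}"
  shows "(\<Sum>S\<in>Pow {1..<n}. f S * L_fund S n T) = (\<Sum>S\<in>Pow T. f S)"
proof -
  have "(\<Sum>S\<in>Pow {1..<n}. f S * L_fund S n T) = (\<Sum>S\<in>Pow {1..<n}. if S \<in> Pow T then f S else 0)"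
    using assms by (intro sum.cong) (auto simp: L_fund_def)
  also have "\<dots> = (\<Sum>S\<in>Pow {1..<n} \<inter> Pow T. f S)"
    by (simp add: sum.inter_restrict)
  also have "Pow {1..<n} \<inter> Pow T = Pow T"
    using assms by auto
  finally show ?thesis .
qed

lemma eq_if_Pow_sums_eq:
  assumes "finite N" "\<And>T. T \<subseteq> N \<Longrightarrow> sum f (Pow T) = (sum g (Pow T) :: 'b::ab_group_add)"
  shows "T \<subseteq> N \<Longrightarrow> f T = g T"
proof (induction "card T" arbitrary: T rule: less_induct)
  case less
  then have "finite T"
    using assms(1) finite_subset by blast
  have "f S = g S" if "S \<in> Pow T - {T}" for S
    using that less.hyps less.prems psubset_card_mono[OF \<open>finite T\<close>] by auto
  then have "sum f (Pow T - {T}) = sum g (Pow T - {T})"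
    by (rule sum.cong[OF refl])
  moreover have "sum f (Pow T) = f T + sum f (Pow T - {T})" "sum g (Pow T) = g T + sum g (Pow T - {T})"
    using \<open>finite T\<close> by (simp_all add: sum.remove)
  ultimately show ?case
    using assms(2)[OF less.prems] by simp
qed

text \<open>The hypothesis is \<open>\<omega> F\<^sub>P = ch \<chi>\<^sub>P\<close> written in the basis \<open>L_fund S n\<close>, as in \<open>good_action\<close>.\<close>

lemma L_fund_coeffs_complement:
  fixes b c :: "nat set \<Rightarrow> int"
  assumes "\<And>T. (\<Sum>S\<in>Pow {1..<n}. b S * L_fund ({1..<n} - S) n T) = (\<Sum>S\<in>Pow {1..<n}. c S * L_fund S n T)"
    and "S \<subseteq> {1..<n}"
  shows "c S = b ({1..<n} - S)"
proof (rule sym, rule eq_if_Pow_sums_eq[OF finite_atLeastLessThan _ assms(2)])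
  fix T
  assume T: "T \<subseteq> {1..<n}"
  have "(\<Sum>S\<in>Pow T. b ({1..<n} - S)) = (\<Sum>S\<in>Pow {1..<n}. b ({1..<n} - S) * L_fund S n T)"
    by (rule sum_L_fund[OF T, symmetric])
  also have "\<dots> = (\<Sum>S\<in>Pow {1..<n}. b S * L_fund ({1..<n} - S) n T)"
    by (rule sum.reindex_bij_witness[where i = "\<lambda>S. {1..<n} - S" and j = "\<lambda>S. {1..<n} - S"])
      (auto simp: double_diff)
  also have "\<dots> = (\<Sum>S\<in>Pow {1..<n}. c S * L_fund S n T)"
    by (rule assms(1))
  also have "\<dots> = sum c (Pow T)"
    by (rule sum_L_fund[OF T])
  finally show "(\<Sum>S\<in>Pow T. b ({1..<n} - S)) = sum c (Pow T)" .
qed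

lemma card_fixed_points_eq_flag_f:
  assumes "good_action TYPE('a::{order,finite}) n U" "set w \<subseteq> {1..<n}"
  shows "card {m \<in> mchains TYPE('a). Uapp U w m = m} = flag_f TYPE('a) ({1..<n} - set w)"
proof -
  let ?N = "{1..<n}" and ?Fix = "{m \<in> mchains TYPE('a). Uapp U w m = m}"
  obtain b c :: "nat set \<Rightarrow> int" where
    F: "\<forall>T. F_P TYPE('a) n T = (\<Sum>S\<in>Pow ?N. b S * L_fund S n T)" and
    char: "\<forall>w. set w \<subseteq> ?N \<longrightarrow> char_P TYPE('a) U w = (\<Sum>S\<in>Pow ?N. c S * chi S w)" and
    omega_F: "\<forall>T. (\<Sum>S\<in>Pow ?N. b S * L_fund (?N - S) n T) = (\<Sum>S\<in>Pow ?N. c S * L_fund S n T)"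
    using assms(1) unfolding good_action_def by (elim conjE exE) (rule that)
  have "(-1) ^ length w * int (card ?Fix) = (\<Sum>S\<in>Pow ?N. c S * chi S w)"
    using char assms(2) by (simp add: char_P_def)
  also have "\<dots> = (\<Sum>S\<in>Pow ?N. (-1) ^ length w * (if set w \<subseteq> S then c S else 0))"
    by (rule sum.cong) (simp_all add: chi_def)
  also have "\<dots> = (-1) ^ length w * (\<Sum>S\<in>Pow ?N. if set w \<subseteq> S then c S else 0)"
    by (rule sum_distrib_left[symmetric])
  also have "(\<Sum>S\<in>Pow ?N. if set w \<subseteq> S then c S else 0) = (\<Sum>S\<in>{S \<in> Pow ?N. set w \<subseteq> S}. c S)"
    by (rule sum.inter_filter[symmetric]) simp
  finally have "int (card ?Fix) = (\<Sum>S\<in>{S \<in> Pow ?N. set w \<subseteq> S}. c S)"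
    by simp
  also have "\<dots> = (\<Sum>S\<in>{S \<in> Pow ?N. set w \<subseteq> S}. b (?N - S))"
    using L_fund_coeffs_complement[OF omega_F[rule_format]] by (intro sum.cong) auto
  also have "\<dots> = (\<Sum>D\<in>Pow (?N - set w). b D)"
    by (rule sum.reindex_bij_witness[where i = "\<lambda>S. ?N - S" and j = "\<lambda>S. ?N - S"]) (use assms(2) in auto)
  also have "\<dots> = F_P TYPE('a) n (?N - set w)"
    using F sum_L_fund[of "?N - set w" n b] by auto
  finally show ?thesis
    by (simp add: F_P_def)
qed

lemma flag_f_empty: "flag_f TYPE('a::{order,finite}) {} = 1"
proof -
  have "{C :: 'a set. is_chain C \<and> rank ` C = {}} = {{}}"
    by (auto simp: is_chain_def)
  then show ?thesis
    by (simp add: flag_f_def)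
qed

lemma flag_f_le_card_subchains:
  assumes "graded_rank TYPE('a::{order,finite}) n"
  shows "flag_f TYPE('a) K \<le> card ((\<lambda>l. (\<lambda>k. l ! k) ` K) ` mchains TYPE('a))"
  unfolding flag_f_def
proof (rule card_mono)
  show "finite ((\<lambda>l. (\<lambda>k. l ! k) ` K) ` mchains TYPE('a))"
    using finite_mchains[OF assms] by simp
  show "{C. is_chain C \<and> rank ` C = K} \<subseteq> (\<lambda>l. (\<lambda>k. l ! k) ` K) ` mchains TYPE('a)"
  proof
    fix C :: "'a set"
    assume "C \<in> {C. is_chain C \<and> rank ` C = K}"
    then have "is_chain C" "rank ` C = K"
      by auto
    then obtain l where "l \<in> mchains TYPE('a)" "C = (\<lambda>k. l ! k) ` K"
      using chain_eq_nth_image_rank[OF assms] by metis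
    then show "C \<in> (\<lambda>l. (\<lambda>k. l ! k) ` K) ` mchains TYPE('a)"
      by blast
  qed
qed

lemma good_action_zero_hecke_action:
  assumes "graded_rank TYPE('a::{order,finite}) n" "good_action TYPE('a) n U"
  shows "zero_hecke_action (mchains TYPE('a)) n U"
proof
  note good = assms(2)[unfolded good_action_def]
  fix i j m
  assume m: "m \<in> mchains TYPE('a)"
  then show "length m = Suc n"
    using mchainsD(4)[OF assms(1)] by simp
  show "U i m \<in> mchains TYPE('a)" if "i \<in> {1..<n}"
    using good that m by blast
  show "U i m ! k = m ! k" if "i \<in> {1..<n}" "k < length m" "k \<noteq> i" for k
    using good that m by blast
  show "U i (U i m) = U i m" if "i \<in> {1..<n}"
    using good that m by blast
  show "U i (U j m) = U j (U i m)" if "i \<in> {1..<n}" "j \<in> {1..<n}" "i + 2 \<le> j \<or> j + 2 \<le> i"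
    using good that m by blast
  show "U i (U (i + 1) (U i m)) = U (i + 1) (U i (U (i + 1) m))" if "1 \<le> i" "i + 1 < n"
    using good that m by blast
qed

lemma unique_fixed_mchain:
  assumes "graded_rank TYPE('a::{order,finite}) n" "good_action TYPE('a) n U"
  shows "\<exists>z\<in>mchains TYPE('a). \<forall>m\<in>mchains TYPE('a). (\<forall>i\<in>{1..<n}. U i m = m) \<longleftrightarrow> m = z"
proof -
  interpret zero_hecke_action "mchains TYPE('a)" n U
    by (rule good_action_zero_hecke_action[OF assms])
  obtain W where W: "set W \<subseteq> {1..<n}" "absorbs {1..<n} W"
    using absorbing_word_exists by blast
  obtain x where x: "x \<in> mchains TYPE('a)"
    using mchains_nonempty[OF assms(1)] by blast
  have z: "Uapp U W x \<in> mchains TYPE('a)" "\<forall>i\<in>{1..<n}. U i (Uapp U W x) = Uapp U W x"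
    using W x by (simp_all add: Uapp_closed absorbs_def)
  have "card {m \<in> mchains TYPE('a). Uapp U [1..<n] m = m} = 1"
    using card_fixed_points_eq_flag_f[OF assms(2), of "[1..<n]"] flag_f_empty by simp
  then obtain z where z_unique: "{m \<in> mchains TYPE('a). Uapp U [1..<n] m = m} = {z}"
    by (rule card_1_singletonE)
  have "m = z" if "m \<in> mchains TYPE('a)" "\<forall>i\<in>{1..<n}. U i m = m" for m
    using that z_unique Uapp_fixed[of "[1..<n]" U m] by auto
  with z show ?thesis
    by metis
qed

lemma card_fixed_points_le_card_subchains:
  assumes graded: "graded_rank TYPE('a::{order,finite}) n" and good: "good_action TYPE('a) n U"
    and w: "set w \<subseteq> {1..<n}"
  defines "Fix \<equiv> {x \<in> mchains TYPE('a). Uapp U w x = x}"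
    and "sub \<equiv> \<lambda>l. (\<lambda>k. l ! k) ` ({1..<n} - set w)"
  shows "card Fix \<le> card (sub ` Fix)"
proof -
  interpret zero_hecke_action "mchains TYPE('a)" n U
    by (rule good_action_zero_hecke_action[OF graded good])
  obtain W where W: "set W \<subseteq> set w" "absorbs (set w) W"
    using absorbing_word_exists[OF w] by blast
  note retract = absorbing_word_retracts[OF w W]
  have "card Fix = flag_f TYPE('a) ({1..<n} - set w)"
    unfolding Fix_def by (rule card_fixed_points_eq_flag_f[OF good w])
  also have "\<dots> \<le> card (sub ` mchains TYPE('a))"
    unfolding sub_def by (rule flag_f_le_card_subchains[OF graded])
  also have "\<dots> \<le> card (sub ` Fix)"
  proof (rule card_mono)
    show "finite (sub ` Fix)"
      using finite_mchains[OF graded] by (simp add: Fix_def)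
    have "sub x = sub (Uapp U W x)" "Uapp U W x \<in> Fix" if "x \<in> mchains TYPE('a)" for x
      using retract[OF that] by (auto simp: sub_def Fix_def)
    then show "sub ` mchains TYPE('a) \<subseteq> sub ` Fix"
      by blast
  qed
  finally show ?thesis .
qed

lemma no_restless_cycle_mchains:
  assumes graded: "graded_rank TYPE('a::{order,finite}) n" and good: "good_action TYPE('a) n U"
    and m: "m \<in> mchains TYPE('a)" and w: "w \<noteq> []" "set w \<subseteq> {1..<n}" "restless U w m"
  shows "Uapp U w m \<noteq> m"
proof
  assume cycle: "Uapp U w m = m"
  interpret zero_hecke_action "mchains TYPE('a)" n U
    by (rule good_action_zero_hecke_action[OF graded good])
  let ?Fix = "{x \<in> mchains TYPE('a). Uapp U w x = x}"
  let ?sub = "\<lambda>l. (\<lambda>k. l ! k) ` ({1..<n} - set w)"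
  have "finite ?Fix"
    using finite_mchains[OF graded] by simp
  then have inj: "inj_on ?sub ?Fix"
    using card_fixed_points_le_card_subchains[OF graded good w(2)] card_image_le[of ?Fix ?sub]
    by (simp add: eq_card_imp_inj_on)
  obtain W where W: "set W \<subseteq> set w" "absorbs (set w) W"
    using absorbing_word_exists[OF w(2)] by blast
  note retract = absorbing_word_retracts[OF w(2) W m]
  obtain v j where "w = v @ [j]"
    using w(1) rev_exhaust by blast
  then have "U j m \<noteq> m" "j \<in> set w"
    using w(3) by (simp_all add: restless_append)
  moreover have "U j (Uapp U W m) = Uapp U W m"
    using W(2) \<open>j \<in> set w\<close> m by (simp add: absorbs_def)
  ultimately have "Uapp U W m \<noteq> m"
    by metis
  moreover have "Uapp U W m = m"
    using inj_onD[OF inj _ _ ] retract m cycle by simp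
  ultimately show False
    by contradiction
qed

theorem mainTheorem13:
  fixes n :: nat and U :: "nat \<Rightarrow> 'a::{order,finite} list \<Rightarrow> 'a list"
  assumes "has_bot_top TYPE('a)"
    and "graded_rank TYPE('a) n"
    and "bowtie_free TYPE('a)"
    and "good_action TYPE('a) n U"
  shows "(\<forall>m\<in>mchains TYPE('a). \<forall>w. set w \<subseteq> {1..<n} \<longrightarrow>
            ((restless U w m \<and> Uapp U w m = m0 TYPE('a) n U)
               \<longrightarrow> reduced_expr n w (omega_m TYPE('a) n U m)) \<and>
            (reduced_expr n w (omega_m TYPE('a) n U m)
               \<longrightarrow> restless U w m \<and> Uapp U w m = m0 TYPE('a) n U))
       \<and> (\<forall>m\<in>mchains TYPE('a). \<forall>i\<in>{1..<n}.
            (has_descent (omega_m TYPE('a) n U m) i \<longleftrightarrow> U i m \<noteq> m) \<and>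
            (U i m \<noteq> m \<longrightarrow>
               omega_m TYPE('a) n U (U i m) = omega_m TYPE('a) n U m \<circ> s i))"
proof -
  interpret zero_hecke_action "mchains TYPE('a)" n U
    by (rule good_action_zero_hecke_action[OF assms(2,4)])
  obtain z where z: "z \<in> mchains TYPE('a)"
    and sink: "\<And>m. m \<in> mchains TYPE('a) \<Longrightarrow> (\<forall>i\<in>{1..<n}. U i m = m) \<longleftrightarrow> m = z"
    using unique_fixed_mchain[OF assms(2,4)] by blast
  interpret bowtie_free_hecke_action "mchains TYPE('a)" n U z
    using finite_mchains[OF assms(2)] z sink no_restless_cycle_mchains[OF assms(2,4)]
      mchains_no_bowtie[OF assms(2,3)]
    by unfold_locales auto
  have m0_eq: "m0 TYPE('a) n U = z"
    unfolding m0_def using z sink by (intro the_equality) auto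
  have omega_m_eq: "omega_m TYPE('a) n U = omega"
    by (simp add: fun_eq_iff omega_m_def omega_def m0_eq)
  show ?thesis
    unfolding omega_m_eq m0_eq
    using restless_path_iff_reduced_expr omega_descent_iff_move omega_move by blast
qed

end
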